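(* For $i\in\{1,2\}$ let $\mathcal{R}_i=(X_i,\Phi_i,\check X_i,\check\Phi_i)$ be a semisimple root datum, $\mathcal{T}_i=(T_i,\emptyset,\check T_i,\emptyset)$ a torus, $A_i$ a finite $\mathbb{Z}$-module with surjections $h_i:X_i\to A_i$ (with $\Phi_i\subseteq\ker h_i$) and $f_i:T_i\to A_i$, and let $\mathcal{R}_i'=\mathcal{R}_i\oplus_{(A_i,h_i,f_i)}\mathcal{T}_i=(B_i,\Phi_i',\check B_i,\check\Phi_i')$. If $\zeta:\mathcal{R}_1'\to\mathcal{R}_2'$ is a $p$-morphism (with $\zeta:B_1\to B_2$), then there exist $p$-morphisms $\zeta_1:\mathcal{R}_1\to\mathcal{R}_2$ (with $\zeta_1:X_1\to X_2$) and $\zeta_2:\mathcal{T}_1\to\mathcal{T}_2$ (with $\zeta_2:T_1\to T_2$) and a group homomorphism $\zeta_3:A_1\to A_2$ such that (a) $\zeta=(\zeta_1\oplus\zeta_2)|_{B_1}$; (b) $\zeta_3\circ h_1=h_2\circ\zeta_1$; (c) $\zeta_3\circ f_1=f_2\circ\zeta_2$. In particular $\zeta_1(\ker h_1)\subseteq\ker h_2$. If $\zeta$ is an isomorphism then so are $\zeta_1,\zeta_2,\zeta_3$, and $\zeta_1(\ker h_1)=\ker h_2$.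
   Context: Root data are reduced quadruples $(X,\Phi,\check X,\check\Phi)$ with perfect pairing; torus = no roots; semisimple means $\mathbb{Q}\Phi=\mathbb{Q}\otimes X$. Fix $p\ge0$ (a prime or $0$). Here a $p$-morphism written $\mathcal{R}\to\mathcal{R}'$ with $\mathcal{R}=(X,\Phi,\dots)$, $\mathcal{R}'=(X',\Phi',\dots)$ means a $\mathbb{Z}$-linear map $g:X\to X'$ together with a function $q:\Phi'\to\{p^n:n\ge0\}$ ($q\equiv1$ if $p=0$) and a bijection $\tau:\Phi'\to\Phi$ with $g(\tau(\alpha))=q(\alpha)\alpha$ and $\check g(\check\alpha)=q(\alpha)\tau(\alpha)^\vee$ for all $\alpha\in\Phi'$, where $\check g:\check X'\to\check X$ is the transpose. Central product $\mathcal{R}\oplus_{(A,h,f)}\mathcal{T}$: the root datum induced from the direct sum $\mathcal{R}\oplus\mathcal{T}$ by the submodule $X\oplus_A T=\{(x,t)\in X\oplus T: h(x)=f(t)\}$, i.e. with lattice $X\oplus_A T$, roots $\{(\alpha,0):\alpha\in\Phi\}$, dual lattice $\mathrm{Hom}(X\oplus_A T,\mathbb{Z})$ and coroots the restrictions of $(\check\alpha,0)$. *)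

theory Defs
  imports Main "HOL-Library.Product_Plus" "HOL-Computational_Algebra.Primes"
begin

definition zsc :: "int \<Rightarrow> 'a::ab_group_add \<Rightarrow> 'a" where
  "zsc k x = (if 0 \<le> k then (\<Sum>_<nat k. x) else - (\<Sum>_<nat (-k). x))"

definition zsubgroup :: "'a::ab_group_add set \<Rightarrow> bool" where
  "zsubgroup L \<longleftrightarrow> 0 \<in> L \<and> (\<forall>x\<in>L. \<forall>y\<in>L. x + y \<in> L) \<and> (\<forall>x\<in>L. - x \<in> L)"

definition zlattice :: "'a::ab_group_add set \<Rightarrow> bool" where
  "zlattice L \<longleftrightarrow> zsubgroup L \<and>
     (\<exists>(n::nat) (b::nat \<Rightarrow> 'a). (\<forall>i<n. b i \<in> L) \<and>
        (\<forall>x\<in>L. \<exists>!c::nat \<Rightarrow> int. (\<forall>i\<ge>n. c i = 0) \<and> x = (\<Sum>i<n. zsc (c i) (b i))))"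

definition zhom :: "'a::ab_group_add set \<Rightarrow> 'b::ab_group_add set \<Rightarrow> ('a \<Rightarrow> 'b) \<Rightarrow> bool" where
  "zhom L L' g \<longleftrightarrow> g ` L \<subseteq> L' \<and> (\<forall>x\<in>L. \<forall>y\<in>L. g (x + y) = g x + g y)"

text \<open>Z-linear functionals on L (elements of the dual lattice Hom(L,Z), compared on L).\<close>
definition zfunctional :: "'a::ab_group_add set \<Rightarrow> ('a \<Rightarrow> int) \<Rightarrow> bool" where
  "zfunctional L \<phi> \<longleftrightarrow> (\<forall>x\<in>L. \<forall>y\<in>L. \<phi> (x + y) = \<phi> x + \<phi> y)"

definition zspan :: "'a::ab_group_add set \<Rightarrow> 'a set" where
  "zspan S = {y. \<exists>F c. finite F \<and> F \<subseteq> S \<and> y = (\<Sum>a\<in>F. zsc (c a) a)}"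

text \<open>A (reduced) root datum (X, Phi, Hom(X,Z), {cor a | a in Phi}); the dual lattice is
  Hom(X,Z) with the evaluation pairing (perfect pairing), and cor a is the coroot of a.\<close>
definition root_datum :: "'a::ab_group_add set \<Rightarrow> 'a set \<Rightarrow> ('a \<Rightarrow> 'a \<Rightarrow> int) \<Rightarrow> bool" where
  "root_datum X \<Phi> cor \<longleftrightarrow>
     zlattice X \<and> finite \<Phi> \<and> \<Phi> \<subseteq> X \<and>
     (\<forall>\<alpha>\<in>\<Phi>. zfunctional X (cor \<alpha>)) \<and>
     (\<forall>\<alpha>\<in>\<Phi>. cor \<alpha> \<alpha> = 2) \<and>
     (\<forall>\<alpha>\<in>\<Phi>. \<forall>\<beta>\<in>\<Phi>. \<beta> - zsc (cor \<alpha> \<beta>) \<alpha> \<in> \<Phi>) \<and>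
     (\<forall>\<alpha>\<in>\<Phi>. \<forall>\<beta>\<in>\<Phi>. \<exists>\<gamma>\<in>\<Phi>. \<forall>x\<in>X. cor \<gamma> x = cor \<beta> x - cor \<beta> \<alpha> * cor \<alpha> x) \<and>
     (\<forall>\<alpha>\<in>\<Phi>. \<forall>\<beta>\<in>\<Phi>. (\<forall>x\<in>X. cor \<alpha> x = cor \<beta> x) \<longrightarrow> \<alpha> = \<beta>)"

definition reduced :: "'a::ab_group_add set \<Rightarrow> bool" where
  "reduced \<Phi> \<longleftrightarrow> (\<forall>\<alpha>\<in>\<Phi>. \<forall>\<beta>\<in>\<Phi>. \<forall>m n::int. n \<noteq> 0 \<and> zsc n \<beta> = zsc m \<alpha> \<longrightarrow> \<beta> = \<alpha> \<or> \<beta> = - \<alpha>)"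

definition reduced_root_datum :: "'a::ab_group_add set \<Rightarrow> 'a set \<Rightarrow> ('a \<Rightarrow> 'a \<Rightarrow> int) \<Rightarrow> bool" where
  "reduced_root_datum X \<Phi> cor \<longleftrightarrow> root_datum X \<Phi> cor \<and> reduced \<Phi>"

text \<open>Semisimple: Q Phi = Q (x) X, i.e. every x in X has a nonzero multiple in the Z-span of Phi.\<close>
definition semisimple :: "'a::ab_group_add set \<Rightarrow> 'a set \<Rightarrow> bool" where
  "semisimple X \<Phi> \<longleftrightarrow> (\<forall>x\<in>X. \<exists>n::int. n \<noteq> 0 \<and> zsc n x \<in> zspan \<Phi>)"

definition no_coroots :: "'a \<Rightarrow> 'a \<Rightarrow> int" where
  "no_coroots = (\<lambda>_ _. 0)"

definition torus :: "'a::ab_group_add set \<Rightarrow> bool" where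
  "torus T \<longleftrightarrow> reduced_root_datum T {} no_coroots"

definition cp_lattice :: "'x::ab_group_add set \<Rightarrow> 't::ab_group_add set \<Rightarrow> ('x \<Rightarrow> 'a) \<Rightarrow> ('t \<Rightarrow> 'a) \<Rightarrow> ('x \<times> 't) set" where
  "cp_lattice X T h f = {(x, t). x \<in> X \<and> t \<in> T \<and> h x = f t}"

definition cp_roots :: "'x set \<Rightarrow> ('x \<times> 't::ab_group_add) set" where
  "cp_roots \<Phi> = (\<lambda>\<alpha>. (\<alpha>, 0)) ` \<Phi>"

text \<open>Coroots of the central product: restrictions of (cor a, 0) to the sublattice.\<close>
definition cp_coroots :: "('x \<Rightarrow> 'x \<Rightarrow> int) \<Rightarrow> ('x \<times> 't) \<Rightarrow> ('x \<times> 't) \<Rightarrow> int" where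
  "cp_coroots cor = (\<lambda>\<beta> y. cor (fst \<beta>) (fst y))"

definition p_powers :: "nat \<Rightarrow> nat set" where
  "p_powers p = (if p = 0 then {1} else range (\<lambda>n. p ^ n))"

text \<open>A p-morphism (X,Phi,cor) -> (X',Phi',cor') given by g : X -> X', q : Phi' -> p-powers,
  bijection tau : Phi' -> Phi with g(tau a) = q(a) a and (transpose g)(cor' a) = q(a) cor(tau a).\<close>
definition p_morphism ::
  "nat \<Rightarrow> 'a::ab_group_add set \<Rightarrow> 'a set \<Rightarrow> ('a \<Rightarrow> 'a \<Rightarrow> int) \<Rightarrow>
   'b::ab_group_add set \<Rightarrow> 'b set \<Rightarrow> ('b \<Rightarrow> 'b \<Rightarrow> int) \<Rightarrow>
   ('a \<Rightarrow> 'b) \<Rightarrow> ('b \<Rightarrow> nat) \<Rightarrow> ('b \<Rightarrow> 'a) \<Rightarrow> bool" where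
  "p_morphism p X \<Phi> cor X' \<Phi>' cor' g q \<tau> \<longleftrightarrow>
     zhom X X' g \<and>
     (\<forall>\<alpha>\<in>\<Phi>'. q \<alpha> \<in> p_powers p) \<and>
     bij_betw \<tau> \<Phi>' \<Phi> \<and>
     (\<forall>\<alpha>\<in>\<Phi>'. g (\<tau> \<alpha>) = zsc (int (q \<alpha>)) \<alpha>) \<and>
     (\<forall>\<alpha>\<in>\<Phi>'. \<forall>x\<in>X. cor' \<alpha> (g x) = int (q \<alpha>) * cor (\<tau> \<alpha>) x)"

definition is_p_morphism ::
  "nat \<Rightarrow> 'a::ab_group_add set \<Rightarrow> 'a set \<Rightarrow> ('a \<Rightarrow> 'a \<Rightarrow> int) \<Rightarrow>
   'b::ab_group_add set \<Rightarrow> 'b set \<Rightarrow> ('b \<Rightarrow> 'b \<Rightarrow> int) \<Rightarrow> ('a \<Rightarrow> 'b) \<Rightarrow> bool" where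
  "is_p_morphism p X \<Phi> cor X' \<Phi>' cor' g \<longleftrightarrow> (\<exists>q \<tau>. p_morphism p X \<Phi> cor X' \<Phi>' cor' g q \<tau>)"

definition p_isomorphism ::
  "nat \<Rightarrow> 'a::ab_group_add set \<Rightarrow> 'a set \<Rightarrow> ('a \<Rightarrow> 'a \<Rightarrow> int) \<Rightarrow>
   'b::ab_group_add set \<Rightarrow> 'b set \<Rightarrow> ('b \<Rightarrow> 'b \<Rightarrow> int) \<Rightarrow> ('a \<Rightarrow> 'b) \<Rightarrow> bool" where
  "p_isomorphism p X \<Phi> cor X' \<Phi>' cor' g \<longleftrightarrow>
     is_p_morphism p X \<Phi> cor X' \<Phi>' cor' g \<and>
     (\<exists>g'. is_p_morphism p X' \<Phi>' cor' X \<Phi> cor g' \<and>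
        (\<forall>x\<in>X. g' (g x) = x) \<and> (\<forall>y\<in>X'. g (g' y) = y))"

definition zker :: "'a set \<Rightarrow> ('a \<Rightarrow> 'b::zero) \<Rightarrow> 'a set" where
  "zker X h = {x \<in> X. h x = 0}"

end

theory Submission
  imports Defs
begin

text \<open>
  Write \<open>B\<^sub>i\<close> for the central product lattice \<open>X\<^sub>i \<oplus>\<^sub>A T\<^sub>i\<close>. Its projections onto \<open>X\<^sub>1\<close> and \<open>T\<^sub>1\<close> are
  surjective with kernels \<open>0 \<times> ker f\<^sub>1\<close> and \<open>ker h\<^sub>1 \<times> 0\<close>, so \<open>\<zeta>\<close> splits as \<open>\<zeta>\<^sub>1 \<oplus> \<zeta>\<^sub>2\<close> once
  \<open>\<zeta>\<close> maps the first kernel into \<open>0 \<times> T\<^sub>2\<close> and the second into \<open>X\<^sub>2 \<times> 0\<close>.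
  For \<open>(0, t)\<close> all coroots vanish, hence so do all coroots at \<open>\<zeta>(0, t)\<close>. In a semisimple root
  datum the coroots separate points: each root \<open>\<alpha>\<close> is a multiple of \<open>\<Sum>\<^sub>\<beta> \<langle>\<beta>, \<alpha>\<^sup>\<or>\<rangle> \<beta>\<close>, so a
  nonzero multiple of \<open>x \<in> \<int>\<Phi>\<close> is \<open>\<Sum>\<^sub>\<beta> \<lambda>\<^sub>\<beta> \<beta>\<close> with \<open>\<lambda>\<^sub>\<beta> = \<Sum>\<^sub>\<alpha> \<mu>\<^sub>\<alpha> \<langle>\<beta>, \<alpha>\<^sup>\<or>\<rangle>\<close>, and then
  \<open>\<Sum>\<^sub>\<beta> \<lambda>\<^sub>\<beta>\<^sup>2 = \<Sum>\<^sub>\<alpha> \<mu>\<^sub>\<alpha> \<langle>x, \<alpha>\<^sup>\<or>\<rangle>\<close>. Hence the \<open>X\<^sub>2\<close>-component of \<open>\<zeta>(0, t)\<close> is zero.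
  For \<open>x \<in> ker h\<^sub>1\<close>, a nonzero multiple of \<open>(x, 0)\<close> is an integral combination of roots,
  which \<open>\<zeta>\<close> sends to multiples of roots \<open>(\<beta>, 0)\<close>; as \<open>T\<^sub>2\<close> is torsion-free, the \<open>T\<^sub>2\<close>-component of \<open>\<zeta>(x, 0)\<close> is zero. Then \<open>\<zeta>\<^sub>1(ker h\<^sub>1) \<subseteq> ker h\<^sub>2\<close>, so \<open>\<zeta>\<^sub>1\<close>
  induces \<open>\<zeta>\<^sub>3\<close> on \<open>A\<^sub>1 = X\<^sub>1 / ker h\<^sub>1\<close>. If \<open>\<zeta>\<close> is an isomorphism, decomposing its inverse in the
  same way yields inverses of \<open>\<zeta>\<^sub>1, \<zeta>\<^sub>2, \<zeta>\<^sub>3\<close>.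
\<close>

lemma zsc_zero_left [simp]: "zsc 0 x = 0"
  by (simp add: zsc_def)

lemma zsc_minus_left: "zsc (- k) x = - zsc k x"
  by (auto simp: zsc_def)

lemma zsc_plus_one: "zsc (k + 1) x = zsc k x + x"
proof (cases "0 \<le> k")
  case True
  then have "nat (k + 1) = Suc (nat k)" by simp
  with True show ?thesis by (simp add: zsc_def)
next
  case False
  then have "nat (- k) = Suc (nat (- (k + 1)))" by simp
  with False show ?thesis by (cases "k = -1") (simp_all add: zsc_def)
qed

lemma zsc_one [simp]: "zsc 1 x = x"
  using zsc_plus_one[of 0 x] by simp

lemma zsc_minus_one: "zsc (k - 1) x = zsc k x - x"
  using zsc_plus_one[of "k - 1" x] by simp

lemma zsc_add_left: "zsc (k + l) x = zsc k x + zsc l x"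
proof (induction l rule: int_induct[where k = 0])
  case (step1 i)
  then show ?case by (simp add: zsc_plus_one flip: add.assoc)
next
  case (step2 i)
  then show ?case using zsc_minus_one[of "k + i" x] zsc_minus_one[of i x] by (simp add: diff_add_eq add_diff_eq)
qed simp

lemma zsc_diff_left: "zsc (k - l) x = zsc k x - zsc l x"
  using zsc_add_left[of k "- l" x] by (simp add: zsc_minus_left)

lemma zsc_add_right: "zsc k (x + y) = zsc k x + zsc k y"
  by (induction k rule: int_induct[where k = 0]) (simp_all add: zsc_plus_one zsc_minus_one algebra_simps)

lemma zsc_zero_right [simp]: "zsc k 0 = 0"
  using zsc_add_right[of k 0 0] by simp

lemma zsc_minus_right: "zsc k (- x) = - zsc k x"
  using zsc_add_right[of k x "- x"] by (simp add: eq_neg_iff_add_eq_0 add.commute)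

lemma zsc_diff_right: "zsc k (x - y) = zsc k x - zsc k y"
  using zsc_add_right[of k x "- y"] by (simp add: zsc_minus_right)

lemma zsc_zsc: "zsc k (zsc l x) = zsc (k * l) x"
  by (induction k rule: int_induct[where k = 0])
    (simp_all add: zsc_plus_one zsc_minus_one zsc_add_left zsc_diff_left distrib_right left_diff_distrib)

lemma zsc_sum_right: "zsc k (\<Sum>i\<in>A. f i) = (\<Sum>i\<in>A. zsc k (f i))"
  by (induction A rule: infinite_finite_induct) (simp_all add: zsc_add_right)

lemma zsc_sum_left: "zsc (\<Sum>i\<in>A. f i) x = (\<Sum>i\<in>A. zsc (f i) x)"
  by (induction A rule: infinite_finite_induct) (simp_all add: zsc_add_left)

lemma zsc_int: "zsc k (n :: int) = k * n"
  by (induction k rule: int_induct[where k = 0]) (simp_all add: zsc_plus_one zsc_minus_one algebra_simps)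

lemma zsc_Pair: "zsc k (x, y) = (zsc k x, zsc k y)"
  by (induction k rule: int_induct[where k = 0]) (simp_all add: zsc_plus_one zsc_minus_one zero_prod_def)

lemma fst_zsc: "fst (zsc k w) = zsc k (fst w)"
  by (metis fst_conv prod.collapse zsc_Pair)

lemma snd_zsc: "snd (zsc k w) = zsc k (snd w)"
  by (metis snd_conv prod.collapse zsc_Pair)

lemma zsubgroup_diff: "zsubgroup L \<Longrightarrow> x \<in> L \<Longrightarrow> y \<in> L \<Longrightarrow> x - y \<in> L"
  unfolding zsubgroup_def by (metis diff_conv_add_uminus)

lemma zsubgroup_zsc: "zsubgroup L \<Longrightarrow> x \<in> L \<Longrightarrow> zsc k x \<in> L"
  by (induction k rule: int_induct[where k = 0])
    (auto simp: zsc_plus_one zsc_minus_one zsubgroup_diff zsubgroup_def)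

lemma zsubgroup_sum: "zsubgroup L \<Longrightarrow> (\<And>i. i \<in> A \<Longrightarrow> f i \<in> L) \<Longrightarrow> (\<Sum>i\<in>A. f i) \<in> L"
  by (induction A rule: infinite_finite_induct) (auto simp: zsubgroup_def)

lemma zhom_zero: "zsubgroup L \<Longrightarrow> zhom L L' g \<Longrightarrow> g 0 = 0"
  unfolding zhom_def zsubgroup_def by (metis add_cancel_right_right add_0)

lemma zhom_minus: "zsubgroup L \<Longrightarrow> zhom L L' g \<Longrightarrow> x \<in> L \<Longrightarrow> g (- x) = - g x"
  using zhom_zero[of L L' g] unfolding zhom_def zsubgroup_def
  by (metis add.right_inverse add_eq_0_iff)

lemma zhom_diff: "zsubgroup L \<Longrightarrow> zhom L L' g \<Longrightarrow> x \<in> L \<Longrightarrow> y \<in> L \<Longrightarrow> g (x - y) = g x - g y"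
  using zhom_minus[of L L' g y] unfolding zhom_def zsubgroup_def
  by (metis diff_conv_add_uminus)

lemma zhom_zsc: "zsubgroup L \<Longrightarrow> zhom L L' g \<Longrightarrow> x \<in> L \<Longrightarrow> g (zsc k x) = zsc k (g x)"
  by (induction k rule: int_induct[where k = 0])
    (auto simp: zsc_plus_one zsc_minus_one zhom_zero zhom_diff zsubgroup_zsc zhom_def)

lemma zhom_sum:
  "zsubgroup L \<Longrightarrow> zhom L L' g \<Longrightarrow> (\<And>i. i \<in> A \<Longrightarrow> f i \<in> L) \<Longrightarrow> g (\<Sum>i\<in>A. f i) = (\<Sum>i\<in>A. g (f i))"
proof (induction A rule: infinite_finite_induct)
  case (insert a A)
  then show ?case by (simp add: zhom_def zsubgroup_sum)
qed (simp_all add: zhom_zero)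

lemma zhom_comp: "zhom X Y g \<Longrightarrow> zhom Y Z h \<Longrightarrow> zhom X Z (h \<circ> g)"
  unfolding zhom_def by (auto simp: image_subset_iff)

lemma zhom_vanishes_on_zspan:
  assumes "zsubgroup L" "zhom L L' g" "S \<subseteq> L" "\<forall>s\<in>S. g s = 0" "v \<in> zspan S"
  shows "g v = 0"
proof -
  from assms(5) obtain F c where "finite F" "F \<subseteq> S" "v = (\<Sum>a\<in>F. zsc (c a) a)"
    unfolding zspan_def by blast
  moreover have "a \<in> L" if "a \<in> F" for a
    using that \<open>F \<subseteq> S\<close> assms(3) by blast
  ultimately have "g v = (\<Sum>a\<in>F. zsc (c a) (g a))"
    using assms(1,2) by (simp add: zhom_sum zhom_zsc zsubgroup_zsc)
  with \<open>F \<subseteq> S\<close> assms(4) show ?thesis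
    by (simp add: subset_iff)
qed

lemma zhom_factors_through_surjection:
  assumes B: "zsubgroup B" and g: "zhom B L g" and k: "zhom B X k" "k ` B = X"
    and ker: "\<forall>w\<in>B. k w = 0 \<longrightarrow> g w = 0"
  shows "\<exists>\<phi>. zhom X L \<phi> \<and> (\<forall>w\<in>B. g w = \<phi> (k w))"
proof -
  define \<phi> where "\<phi> y = g (SOME w. w \<in> B \<and> k w = y)" for y
  have factor: "g w = \<phi> (k w)" if w: "w \<in> B" for w
  proof -
    define w' where "w' = (SOME w'. w' \<in> B \<and> k w' = k w)"
    have w': "w' \<in> B" "k w' = k w"
      unfolding w'_def using someI_ex[of "\<lambda>w'. w' \<in> B \<and> k w' = k w"] w by blast+
    then have "g (w - w') = 0"
      using ker zsubgroup_diff[OF B w w'(1)] zhom_diff[OF B k(1) w w'(1)] by simp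
    then show ?thesis
      using zhom_diff[OF B g w w'(1)] by (simp add: \<phi>_def w'_def)
  qed
  have "zhom X L \<phi>"
    unfolding zhom_def
  proof (intro conjI ballI subsetI)
    fix y assume "y \<in> \<phi> ` X"
    then obtain w where w: "w \<in> B" "y = \<phi> (k w)" using k(2) by blast
    then have "y = g w" using factor by simp
    with g w(1) show "y \<in> L" by (auto simp: zhom_def)
  next
    fix y z assume "y \<in> X" "z \<in> X"
    then obtain v w where vw: "v \<in> B" "w \<in> B" "y = k v" "z = k w" using k(2) by blast
    then have "v + w \<in> B" "y + z = k (v + w)"
      using B k(1) by (simp_all add: zsubgroup_def zhom_def)
    then have "\<phi> (y + z) = g (v + w)"
      using factor by simp
    also have "\<dots> = g v + g w"
      using g vw by (simp add: zhom_def)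
    finally show "\<phi> (y + z) = \<phi> y + \<phi> z"
      using vw factor by simp
  qed
  with factor show ?thesis by blast
qed

lemma zfunctional_iff_zhom: "zfunctional L \<phi> \<longleftrightarrow> zhom L UNIV \<phi>"
  by (simp add: zhom_def zfunctional_def)

lemma zfunctional_zero: "zsubgroup L \<Longrightarrow> zfunctional L \<phi> \<Longrightarrow> \<phi> 0 = 0"
  by (simp add: zfunctional_iff_zhom zhom_zero)

lemma zfunctional_diff: "zsubgroup L \<Longrightarrow> zfunctional L \<phi> \<Longrightarrow> x \<in> L \<Longrightarrow> y \<in> L \<Longrightarrow> \<phi> (x - y) = \<phi> x - \<phi> y"
  by (simp add: zfunctional_iff_zhom zhom_diff)

lemma zfunctional_zsc: "zsubgroup L \<Longrightarrow> zfunctional L \<phi> \<Longrightarrow> x \<in> L \<Longrightarrow> \<phi> (zsc k x) = k * \<phi> x"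
  by (simp add: zfunctional_iff_zhom zhom_zsc zsc_int)

lemma zfunctional_sum:
  "zsubgroup L \<Longrightarrow> zfunctional L \<phi> \<Longrightarrow> (\<And>i. i \<in> A \<Longrightarrow> f i \<in> L) \<Longrightarrow> \<phi> (\<Sum>i\<in>A. f i) = (\<Sum>i\<in>A. \<phi> (f i))"
  by (simp add: zfunctional_iff_zhom zhom_sum)

lemma zlattice_zsubgroup: "zlattice L \<Longrightarrow> zsubgroup L"
  by (simp add: zlattice_def)

lemma zlattice_torsion_free:
  assumes "zlattice L" "y \<in> L" "n \<noteq> 0" "zsc n y = 0"
  shows "y = 0"
proof -
  from assms(1) obtain m b where L: "zsubgroup L"
    and coords: "\<forall>x\<in>L. \<exists>!c::nat \<Rightarrow> int. (\<forall>i\<ge>m. c i = 0) \<and> x = (\<Sum>i<m. zsc (c i) (b i))"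
    unfolding zlattice_def by blast
  from coords assms(2) obtain c where c: "\<forall>i\<ge>m. c i = 0" "y = (\<Sum>i<m. zsc (c i) (b i))"
    by blast
  have "0 \<in> L" using L by (simp add: zsubgroup_def)
  with coords have unique: "c1 = c2"
    if "(\<forall>i\<ge>m. c1 i = 0) \<and> 0 = (\<Sum>i<m. zsc (c1 i) (b i))"
      and "(\<forall>i\<ge>m. c2 i = 0) \<and> 0 = (\<Sum>i<m. zsc (c2 i) (b i))" for c1 c2
    using that by blast
  moreover have "0 = (\<Sum>i<m. zsc (n * c i) (b i))"
    using assms(4) c(2) by (simp add: zsc_sum_right zsc_zsc)
  moreover have "0 = (\<Sum>i<m. zsc ((\<lambda>_. 0::int) i) (b i))"
    by simp
  ultimately have "(\<lambda>i. n * c i) = (\<lambda>_. 0)"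
    using c(1) by (intro unique) simp_all
  with assms(3) c show ?thesis
    by (simp add: fun_eq_iff)
qed

section \<open>Coroots separate points in a semisimple root datum\<close>

lemma root_datum_zsubgroup: "root_datum X \<Phi> cor \<Longrightarrow> zsubgroup X"
  by (simp add: root_datum_def zlattice_def)

text \<open>Reindex by the reflection \<open>s\<^sub>a\<close>, which permutes \<open>\<Phi>\<close> and negates \<open>cor a\<close>.\<close>
lemma root_datum_coroot_weighted_sum:
  assumes rd: "root_datum X \<Phi> cor" and a: "a \<in> \<Phi>"
  shows "zsc 2 (\<Sum>b\<in>\<Phi>. zsc (cor a b) b) = zsc (\<Sum>b\<in>\<Phi>. (cor a b)\<^sup>2) a"
proof -
  have X: "zsubgroup X" using rd by (rule root_datum_zsubgroup)
  have \<Phi>X: "\<Phi> \<subseteq> X" and fa: "zfunctional X (cor a)" and caa: "cor a a = 2"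
    and refl: "\<forall>b\<in>\<Phi>. b - zsc (cor a b) a \<in> \<Phi>"
    using rd a unfolding root_datum_def by auto
  define s where "s b = b - zsc (cor a b) a" for b
  have cor_s: "cor a (s b) = - cor a b" if "b \<in> \<Phi>" for b
  proof -
    have "a \<in> X" "b \<in> X" using that a \<Phi>X by auto
    then have "cor a (s b) = cor a b - cor a b * cor a a"
      unfolding s_def
      by (simp add: zfunctional_diff[OF X fa] zfunctional_zsc[OF X fa] zsubgroup_zsc[OF X])
    with caa show ?thesis by simp
  qed
  have s_s: "s (s b) = b" if "b \<in> \<Phi>" for b
    using cor_s[OF that] by (simp add: s_def[of "s b"] zsc_minus_left) (simp add: s_def)
  have "bij_betw s \<Phi> \<Phi>"
    by (rule bij_betw_byWitness[where f' = s]) (use s_s refl s_def in auto)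
  define S where "S = (\<Sum>b\<in>\<Phi>. zsc (cor a b) b)"
  have "S = (\<Sum>b\<in>\<Phi>. zsc (cor a (s b)) (s b))"
    unfolding S_def by (rule sum.reindex_bij_betw[symmetric]) fact
  also have "\<dots> = (\<Sum>b\<in>\<Phi>. - zsc (cor a b) b + zsc ((cor a b)\<^sup>2) a)"
    by (rule sum.cong) (use cor_s in \<open>simp_all add: s_def zsc_minus_left zsc_diff_right zsc_zsc power2_eq_square\<close>)
  also have "\<dots> = - S + zsc (\<Sum>b\<in>\<Phi>. (cor a b)\<^sup>2) a"
    by (simp only: sum.distrib sum_negf S_def zsc_sum_left)
  finally have "S + S = zsc (\<Sum>b\<in>\<Phi>. (cor a b)\<^sup>2) a"
    by (simp add: algebra_simps)
  then show ?thesis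
    using zsc_add_left[of 1 1 S] by (simp add: S_def)
qed

lemma root_datum_zspan_multiple:
  assumes rd: "root_datum X \<Phi> cor" and v: "v \<in> zspan \<Phi>"
  obtains L \<mu> where "L \<noteq> 0" "zsc L v = (\<Sum>b\<in>\<Phi>. zsc (\<Sum>a\<in>\<Phi>. \<mu> a * cor a b) b)"
proof -
  have fin: "finite \<Phi>" and caa: "\<And>a. a \<in> \<Phi> \<Longrightarrow> cor a a = 2"
    using rd unfolding root_datum_def by auto
  obtain F c where F: "finite F" "F \<subseteq> \<Phi>" and vF: "v = (\<Sum>a\<in>F. zsc (c a) a)"
    using v unfolding zspan_def by blast
  define c' where "c' a = (if a \<in> F then c a else 0)" for a
  have v\<Phi>: "v = (\<Sum>a\<in>\<Phi>. zsc (c' a) a)"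
    unfolding vF by (rule sum.mono_neutral_cong_left[OF fin F(2)]) (auto simp: c'_def)
  define K where "K a = (\<Sum>b\<in>\<Phi>. (cor a b)\<^sup>2)" for a
  have K_pos: "K a > 0" if "a \<in> \<Phi>" for a
  proof -
    have "(cor a a)\<^sup>2 \<le> K a"
      unfolding K_def by (rule member_le_sum[OF that]) (simp_all add: fin)
    with caa[OF that] show ?thesis by simp
  qed
  define L where "L = (\<Prod>a\<in>\<Phi>. K a)"
  have "L \<noteq> 0"
    unfolding L_def using K_pos fin by (simp add: prod_zero_iff) (metis less_irrefl)
  define M where "M a = L div K a" for a
  have LKM: "L = M a * K a" if "a \<in> \<Phi>" for a
    unfolding M_def L_def using dvd_prodI[OF fin that, of K] by simp
  define \<mu> where "\<mu> a = 2 * c' a * M a" for a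
  have "zsc L v = (\<Sum>a\<in>\<Phi>. zsc (c' a * M a) (zsc (K a) a))"
    unfolding v\<Phi> zsc_sum_right by (rule sum.cong) (simp_all add: zsc_zsc LKM ac_simps)
  also have "\<dots> = (\<Sum>a\<in>\<Phi>. \<Sum>b\<in>\<Phi>. zsc (\<mu> a * cor a b) b)"
    by (rule sum.cong)
      (simp_all add: K_def root_datum_coroot_weighted_sum[OF rd, symmetric] zsc_zsc zsc_sum_right \<mu>_def ac_simps)
  also have "\<dots> = (\<Sum>b\<in>\<Phi>. zsc (\<Sum>a\<in>\<Phi>. \<mu> a * cor a b) b)"
    by (subst sum.swap) (simp add: zsc_sum_left)
  finally show ?thesis
    using \<open>L \<noteq> 0\<close> that by blast
qed

lemma root_datum_coroot_combination_eq_0: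
  assumes rd: "root_datum X \<Phi> cor"
    and v: "v = (\<Sum>b\<in>\<Phi>. zsc (\<Sum>a\<in>\<Phi>. \<mu> a * cor a b) b)"
    and cor_v: "\<forall>a\<in>\<Phi>. cor a v = 0"
  shows "v = 0"
proof -
  have X: "zsubgroup X" using rd by (rule root_datum_zsubgroup)
  have fin: "finite \<Phi>" and \<Phi>X: "\<Phi> \<subseteq> X" and fa: "\<And>a. a \<in> \<Phi> \<Longrightarrow> zfunctional X (cor a)"
    using rd unfolding root_datum_def by auto
  define l where "l b = (\<Sum>a\<in>\<Phi>. \<mu> a * cor a b)" for b
  have cor_sum: "cor a v = (\<Sum>b\<in>\<Phi>. l b * cor a b)" if "a \<in> \<Phi>" for a
  proof -
    have "cor a v = (\<Sum>b\<in>\<Phi>. cor a (zsc (l b) b))"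
      unfolding v l_def[symmetric] using \<Phi>X
      by (intro zfunctional_sum[OF X fa[OF that]] zsubgroup_zsc[OF X]) auto
    also have "\<dots> = (\<Sum>b\<in>\<Phi>. l b * cor a b)"
      using \<Phi>X by (intro sum.cong) (auto simp: zfunctional_zsc[OF X fa[OF that]])
    finally show ?thesis .
  qed
  have "(\<Sum>b\<in>\<Phi>. (l b)\<^sup>2) = (\<Sum>a\<in>\<Phi>. \<mu> a * (\<Sum>b\<in>\<Phi>. l b * cor a b))"
    unfolding power2_eq_square l_def[of b for b]
    by (simp add: sum_distrib_left sum_distrib_right ac_simps) (rule sum.swap)
  also have "\<dots> = 0"
    using cor_v cor_sum by simp
  finally have "\<forall>b\<in>\<Phi>. l b = 0"
    using sum_nonneg_eq_0_iff[OF fin, of "\<lambda>b. (l b)\<^sup>2"] by simp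
  then show ?thesis
    unfolding v l_def[symmetric] by simp
qed

lemma semisimple_coroots_separate:
  assumes rd: "root_datum X \<Phi> cor" and ss: "semisimple X \<Phi>"
    and y: "y \<in> X" and cor_y: "\<forall>a\<in>\<Phi>. cor a y = 0"
  shows "y = 0"
proof -
  have X: "zsubgroup X" using rd by (rule root_datum_zsubgroup)
  obtain n where n: "n \<noteq> 0" "zsc n y \<in> zspan \<Phi>"
    using ss y unfolding semisimple_def by blast
  then obtain L \<mu> where L: "L \<noteq> 0"
    and Lny: "zsc L (zsc n y) = (\<Sum>b\<in>\<Phi>. zsc (\<Sum>a\<in>\<Phi>. \<mu> a * cor a b) b)"
    using root_datum_zspan_multiple[OF rd] by blast
  have "\<forall>a\<in>\<Phi>. cor a (zsc L (zsc n y)) = 0"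
    using rd cor_y y by (simp add: root_datum_def zfunctional_zsc[OF X] zsubgroup_zsc[OF X])
  then have "zsc (L * n) y = 0"
    using root_datum_coroot_combination_eq_0[OF rd Lny] by (simp add: zsc_zsc)
  with rd y L n(1) show ?thesis
    by (intro zlattice_torsion_free[of X y "L * n"]) (simp_all add: root_datum_def)
qed

lemma torus_zlattice: "torus T \<Longrightarrow> zlattice T"
  by (simp add: torus_def reduced_root_datum_def root_datum_def)

lemma p_morphism_zhom: "p_morphism p X \<Phi> cor X' \<Phi>' cor' g q \<tau> \<Longrightarrow> zhom X X' g"
  by (simp add: p_morphism_def)

lemma is_p_morphism_zhom: "is_p_morphism p X \<Phi> cor X' \<Phi>' cor' g \<Longrightarrow> zhom X X' g"
  by (auto simp: is_p_morphism_def p_morphism_def)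

lemma p_morphism_root_image:
  assumes "p_morphism p X \<Phi> cor X' \<Phi>' cor' g q \<tau>" "\<alpha> \<in> \<Phi>"
  shows "\<exists>\<beta>\<in>\<Phi>'. g \<alpha> = zsc (int (q \<beta>)) \<beta>"
  using assms unfolding p_morphism_def bij_betw_def by auto

lemma torus_is_p_morphism: "zhom T T' g \<Longrightarrow> is_p_morphism p T {} no_coroots T' {} no_coroots g"
  unfolding is_p_morphism_def p_morphism_def by (simp add: bij_betw_def)

lemma cp_lattice_zsubgroup:
  assumes "zsubgroup X" "zsubgroup T" "zhom X A h" "zhom T A f"
  shows "zsubgroup (cp_lattice X T h f)"
  using assms zhom_zero[OF assms(1,3)] zhom_zero[OF assms(2,4)]
    zhom_minus[OF assms(1,3)] zhom_minus[OF assms(2,4)]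
  unfolding zsubgroup_def cp_lattice_def zhom_def by (auto simp: zero_prod_def)

lemma cp_lattice_fst_zhom: "zhom (cp_lattice X T h f) X fst"
  by (auto simp: zhom_def cp_lattice_def)

lemma cp_lattice_snd_zhom: "zhom (cp_lattice X T h f) T snd"
  by (auto simp: zhom_def cp_lattice_def)

lemma fst_cp_lattice: "h ` X \<subseteq> f ` T \<Longrightarrow> fst ` cp_lattice X T h f = X"
  unfolding cp_lattice_def by (force simp: image_iff)

lemma snd_cp_lattice: "f ` T \<subseteq> h ` X \<Longrightarrow> snd ` cp_lattice X T h f = T"
  unfolding cp_lattice_def by (force simp: image_iff)

lemma cp_roots_subset_cp_lattice:
  "\<Phi> \<subseteq> X \<Longrightarrow> \<forall>\<alpha>\<in>\<Phi>. h \<alpha> = 0 \<Longrightarrow> 0 \<in> T \<Longrightarrow> f 0 = 0 \<Longrightarrow> cp_roots \<Phi> \<subseteq> cp_lattice X T h f"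
  unfolding cp_roots_def cp_lattice_def by auto

lemma zspan_cp_roots:
  assumes "v \<in> zspan \<Phi>"
  shows "(v, 0) \<in> zspan (cp_roots \<Phi>)"
proof -
  obtain F c where F: "finite F" "F \<subseteq> \<Phi>" and v: "v = (\<Sum>a\<in>F. zsc (c a) a)"
    using assms unfolding zspan_def by blast
  have "(v, 0) = (\<Sum>a\<in>F. zsc (c a) (a, 0))"
    by (rule prod_eqI) (simp_all add: v fst_sum snd_sum zsc_Pair)
  also have "\<dots> = (\<Sum>w\<in>(\<lambda>a. (a, 0)) ` F. zsc (c (fst w)) w)"
    by (subst sum.reindex) (auto simp: inj_on_def)
  finally show ?thesis
    unfolding zspan_def cp_roots_def
    by (intro CollectI exI[of _ "(\<lambda>a. (a, 0)) ` F"] exI[of _ "\<lambda>w. c (fst w)"]) (use F in auto)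
qed

lemma cp_p_morphism_fst_vanishes:
  assumes rd1: "root_datum X1 \<Phi>1 cor1" and rd2: "root_datum X2 \<Phi>2 cor2" and ss2: "semisimple X2 \<Phi>2"
    and \<zeta>: "p_morphism p B1 (cp_roots \<Phi>1) (cp_coroots cor1) B2 (cp_roots \<Phi>2) (cp_coroots cor2) \<zeta> q \<tau>"
    and B2: "fst ` B2 \<subseteq> X2" and w: "w \<in> B1" "fst w = 0"
  shows "fst (\<zeta> w) = 0"
proof (rule semisimple_coroots_separate[OF rd2 ss2])
  show "fst (\<zeta> w) \<in> X2"
    using p_morphism_zhom[OF \<zeta>] w B2 by (auto simp: zhom_def)
  show "\<forall>\<beta>\<in>\<Phi>2. cor2 \<beta> (fst (\<zeta> w)) = 0"
  proof
    fix \<beta> assume "\<beta> \<in> \<Phi>2"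
    then have \<beta>: "(\<beta>, 0) \<in> cp_roots \<Phi>2" by (simp add: cp_roots_def)
    with \<zeta> obtain \<alpha> where "\<alpha> \<in> \<Phi>1" "\<tau> (\<beta>, 0) = (\<alpha>, 0)"
      unfolding p_morphism_def bij_betw_def cp_roots_def by blast
    moreover have "cor1 \<alpha> 0 = 0" if "\<alpha> \<in> \<Phi>1"
      using that rd1 root_datum_zsubgroup[OF rd1] zfunctional_zero unfolding root_datum_def by blast
    moreover have "cp_coroots cor2 (\<beta>, 0) (\<zeta> w) = int (q (\<beta>, 0)) * cp_coroots cor1 (\<tau> (\<beta>, 0)) w"
      using \<zeta> \<beta> w(1) unfolding p_morphism_def by blast
    ultimately show "cor2 \<beta> (fst (\<zeta> w)) = 0"
      using w(2) by (auto simp: cp_coroots_def)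
  qed
qed

lemma cp_p_morphism_snd_vanishes:
  fixes \<zeta> :: "'x1::ab_group_add \<times> 't1::ab_group_add \<Rightarrow> 'x2::ab_group_add \<times> 't2::ab_group_add"
  assumes ss1: "semisimple X1 \<Phi>1" and T2: "zlattice T2"
    and \<zeta>: "p_morphism p B1 (cp_roots \<Phi>1) (cp_coroots cor1) B2 (cp_roots \<Phi>2) (cp_coroots cor2) \<zeta> q \<tau>"
    and B1: "zsubgroup B1" "cp_roots \<Phi>1 \<subseteq> B1" and B2: "snd ` B2 \<subseteq> T2"
    and w: "w \<in> B1" "fst w \<in> X1" "snd w = 0"
  shows "snd (\<zeta> w) = 0"
proof -
  have \<zeta>_hom: "zhom B1 B2 \<zeta>" by (rule p_morphism_zhom[OF \<zeta>])
  obtain n where n: "n \<noteq> 0" "zsc n (fst w) \<in> zspan \<Phi>1"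
    using ss1 w(2) unfolding semisimple_def by blast
  have "zsc n w = (zsc n (fst w), 0)"
    using w(3) by (simp add: prod_eq_iff fst_zsc snd_zsc)
  then have span: "zsc n w \<in> zspan (cp_roots \<Phi>1)"
    using zspan_cp_roots[OF n(2)] by simp
  have snd_hom: "zhom B1 T2 (snd \<circ> \<zeta>)"
    using \<zeta>_hom B2 by (auto simp: zhom_def)
  have roots: "\<forall>r\<in>cp_roots \<Phi>1. (snd \<circ> \<zeta>) r = 0"
  proof
    fix r :: "'x1 \<times> 't1" assume "r \<in> cp_roots \<Phi>1"
    then obtain \<beta> where "\<zeta> r = zsc (int (q \<beta>)) \<beta>" "\<beta> \<in> cp_roots \<Phi>2"
      using p_morphism_root_image[OF \<zeta>] by blast
    then show "(snd \<circ> \<zeta>) r = 0" by (auto simp: cp_roots_def zsc_Pair)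
  qed
  have "(snd \<circ> \<zeta>) (zsc n w) = 0"
    by (rule zhom_vanishes_on_zspan[OF B1(1) snd_hom B1(2) roots span])
  then have "zsc n (snd (\<zeta> w)) = 0"
    by (simp add: zhom_zsc[OF B1(1) \<zeta>_hom w(1)] snd_zsc)
  moreover have "snd (\<zeta> w) \<in> T2"
    using \<zeta>_hom w(1) B2 by (auto simp: zhom_def)
  ultimately show ?thesis
    by (metis zlattice_torsion_free[OF T2 _ n(1)])
qed

lemma cp_p_morphism_splits:
  fixes \<zeta> :: "'x1::ab_group_add \<times> 't1::ab_group_add \<Rightarrow> 'x2::ab_group_add \<times> 't2::ab_group_add"
  assumes rd1: "root_datum X1 \<Phi>1 cor1" and ss1: "semisimple X1 \<Phi>1"
    and rd2: "root_datum X2 \<Phi>2 cor2" and ss2: "semisimple X2 \<Phi>2"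
    and T1: "zsubgroup T1" and T2: "zlattice T2"
    and h1: "zhom X1 A1 h1" "h1 ` X1 = A1" "\<forall>\<alpha>\<in>\<Phi>1. h1 \<alpha> = 0"
    and f1: "zhom T1 A1 f1" "f1 ` T1 = A1"
    and \<zeta>: "p_morphism p (cp_lattice X1 T1 h1 f1) (cp_roots \<Phi>1) (cp_coroots cor1)
                          (cp_lattice X2 T2 h2 f2) (cp_roots \<Phi>2) (cp_coroots cor2) \<zeta> q \<tau>"
  shows "\<exists>\<zeta>1 \<zeta>2. zhom X1 X2 \<zeta>1 \<and> zhom T1 T2 \<zeta>2 \<and>
           (\<forall>(x, t)\<in>cp_lattice X1 T1 h1 f1. \<zeta> (x, t) = (\<zeta>1 x, \<zeta>2 t))"
proof -
  define B1 where "B1 = cp_lattice X1 T1 h1 f1"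
  define B2 where "B2 = cp_lattice X2 T2 h2 f2"
  have X1: "zsubgroup X1" using rd1 by (rule root_datum_zsubgroup)
  have B1_sub: "zsubgroup B1"
    unfolding B1_def by (rule cp_lattice_zsubgroup[OF X1 T1 h1(1) f1(1)])
  have roots_B1: "cp_roots \<Phi>1 \<subseteq> B1"
    unfolding B1_def using rd1 T1 h1(3) zhom_zero[OF T1 f1(1)]
    by (intro cp_roots_subset_cp_lattice) (simp_all add: root_datum_def zsubgroup_def)
  have fst_B1: "fst ` B1 = X1" and snd_B1: "snd ` B1 = T1"
    unfolding B1_def using h1(2) f1(2) by (simp_all add: fst_cp_lattice snd_cp_lattice)
  note \<zeta> = \<zeta>[folded B1_def B2_def]
  have "zhom B1 B2 \<zeta>" by (rule p_morphism_zhom[OF \<zeta>])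
  moreover have fst_B2: "fst ` B2 \<subseteq> X2" and snd_B2: "snd ` B2 \<subseteq> T2"
    by (auto simp: B2_def cp_lattice_def)
  ultimately have fst_hom: "zhom B1 X2 (fst \<circ> \<zeta>)" and snd_hom: "zhom B1 T2 (snd \<circ> \<zeta>)"
    unfolding zhom_def by (simp_all add: image_subset_iff)
  have "\<forall>w\<in>B1. fst w = 0 \<longrightarrow> (fst \<circ> \<zeta>) w = 0"
    using cp_p_morphism_fst_vanishes[OF rd1 rd2 ss2 \<zeta> fst_B2] by simp
  then obtain \<zeta>1 where \<zeta>1: "zhom X1 X2 \<zeta>1" "\<forall>w\<in>B1. (fst \<circ> \<zeta>) w = \<zeta>1 (fst w)"
    using zhom_factors_through_surjection[OF B1_sub fst_hom _ fst_B1]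
      cp_lattice_fst_zhom[of X1 T1 h1 f1, folded B1_def] by blast
  have "\<forall>w\<in>B1. snd w = 0 \<longrightarrow> (snd \<circ> \<zeta>) w = 0"
    using cp_p_morphism_snd_vanishes[OF ss1 T2 \<zeta> B1_sub roots_B1 snd_B2] fst_B1 by auto
  then obtain \<zeta>2 where \<zeta>2: "zhom T1 T2 \<zeta>2" "\<forall>w\<in>B1. (snd \<circ> \<zeta>) w = \<zeta>2 (snd w)"
    using zhom_factors_through_surjection[OF B1_sub snd_hom _ snd_B1]
      cp_lattice_snd_zhom[of X1 T1 h1 f1, folded B1_def] by blast
  have "\<forall>(x, t)\<in>B1. \<zeta> (x, t) = (\<zeta>1 x, \<zeta>2 t)"
    using \<zeta>1(2) \<zeta>2(2) by (auto simp: prod_eq_iff)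
  with \<zeta>1(1) \<zeta>2(1) show ?thesis
    unfolding B1_def by blast
qed

lemma cp_p_morphism_restricts:
  assumes \<zeta>: "p_morphism p B1 (cp_roots \<Phi>1) (cp_coroots cor1) B2 (cp_roots \<Phi>2) (cp_coroots cor2) \<zeta> q \<tau>"
    and \<zeta>1: "zhom X1 X2 \<zeta>1" and split: "\<forall>w\<in>B1. fst (\<zeta> w) = \<zeta>1 (fst w)"
    and B1: "fst ` B1 = X1" "cp_roots \<Phi>1 \<subseteq> B1"
  shows "p_morphism p X1 \<Phi>1 cor1 X2 \<Phi>2 cor2 \<zeta>1 (\<lambda>\<beta>. q (\<beta>, 0)) (\<lambda>\<beta>. fst (\<tau> (\<beta>, 0)))"
proof -
  have \<tau>: "bij_betw \<tau> (cp_roots \<Phi>2) (cp_roots \<Phi>1)"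
    and roots: "\<forall>\<beta>\<in>cp_roots \<Phi>2. \<zeta> (\<tau> \<beta>) = zsc (int (q \<beta>)) \<beta>"
    and coroots: "\<forall>\<beta>\<in>cp_roots \<Phi>2. \<forall>w\<in>B1.
                    cp_coroots cor2 \<beta> (\<zeta> w) = int (q \<beta>) * cp_coroots cor1 (\<tau> \<beta>) w"
    using \<zeta> unfolding p_morphism_def by blast+
  have \<tau>_root: "\<tau> (\<beta>, 0) = (fst (\<tau> (\<beta>, 0)), 0)" "\<tau> (\<beta>, 0) \<in> B1" if "\<beta> \<in> \<Phi>2" for \<beta>
  proof -
    have "\<tau> (\<beta>, 0) \<in> cp_roots \<Phi>1"
      using that \<tau> unfolding bij_betw_def cp_roots_def by blast
    then show "\<tau> (\<beta>, 0) = (fst (\<tau> (\<beta>, 0)), 0)" "\<tau> (\<beta>, 0) \<in> B1"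
      using B1(2) by (auto simp: cp_roots_def)
  qed
  show ?thesis
    unfolding p_morphism_def
  proof (intro conjI ballI)
    show "zhom X1 X2 \<zeta>1" by (fact \<zeta>1)
  next
    fix \<beta> assume "\<beta> \<in> \<Phi>2"
    then show "q (\<beta>, 0) \<in> p_powers p"
      using \<zeta> by (auto simp: p_morphism_def cp_roots_def)
  next
    have "bij_betw (\<lambda>\<beta>. (\<beta>, 0)) \<Phi>2 (cp_roots \<Phi>2)" "bij_betw fst (cp_roots \<Phi>1) \<Phi>1"
      by (auto simp: bij_betw_def cp_roots_def inj_on_def image_image)
    from bij_betw_trans[OF bij_betw_trans[OF this(1) \<tau>] this(2)]
    show "bij_betw (\<lambda>\<beta>. fst (\<tau> (\<beta>, 0))) \<Phi>2 \<Phi>1"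
      by (simp add: comp_def)
  next
    fix \<beta> assume \<beta>: "\<beta> \<in> \<Phi>2"
    then have "\<zeta>1 (fst (\<tau> (\<beta>, 0))) = fst (\<zeta> (\<tau> (\<beta>, 0)))"
      using split \<tau>_root by simp
    also have "\<dots> = zsc (int (q (\<beta>, 0))) \<beta>"
      using roots \<beta> by (simp add: cp_roots_def fst_zsc)
    finally show "\<zeta>1 (fst (\<tau> (\<beta>, 0))) = zsc (int (q (\<beta>, 0))) \<beta>" .
  next
    fix \<beta> x assume \<beta>: "\<beta> \<in> \<Phi>2" and "x \<in> X1"
    then obtain w where w: "w \<in> B1" "x = fst w" using B1(1) by blast
    then have "cor2 \<beta> (\<zeta>1 x) = cp_coroots cor2 (\<beta>, 0) (\<zeta> w)"
      using split by (simp add: cp_coroots_def)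
    also have "\<dots> = int (q (\<beta>, 0)) * cor1 (fst (\<tau> (\<beta>, 0))) x"
      using coroots \<beta> w by (simp add: cp_roots_def cp_coroots_def)
    finally show "cor2 \<beta> (\<zeta>1 x) = int (q (\<beta>, 0)) * cor1 (fst (\<tau> (\<beta>, 0))) x" .
  qed
qed

lemma cp_p_morphism_decomposition:
  fixes \<zeta> :: "'x1::ab_group_add \<times> 't1::ab_group_add \<Rightarrow> 'x2::ab_group_add \<times> 't2::ab_group_add"
  assumes rd1: "root_datum X1 \<Phi>1 cor1" and ss1: "semisimple X1 \<Phi>1"
    and rd2: "root_datum X2 \<Phi>2 cor2" and ss2: "semisimple X2 \<Phi>2"
    and T1: "zlattice T1" and T2: "zlattice T2"
    and h1: "zhom X1 A1 h1" "h1 ` X1 = A1" "\<forall>\<alpha>\<in>\<Phi>1. h1 \<alpha> = 0"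
    and f1: "zhom T1 A1 f1" "f1 ` T1 = A1"
    and h2: "zhom X2 A2 h2" and f2: "zhom T2 A2 f2"
    and \<zeta>: "is_p_morphism p
                 (cp_lattice X1 T1 h1 f1) (cp_roots \<Phi>1) (cp_coroots cor1)
                 (cp_lattice X2 T2 h2 f2) (cp_roots \<Phi>2) (cp_coroots cor2) \<zeta>"
  shows "\<exists>\<zeta>1 \<zeta>2 \<zeta>3.
           is_p_morphism p X1 \<Phi>1 cor1 X2 \<Phi>2 cor2 \<zeta>1 \<and>
           is_p_morphism p T1 {} no_coroots T2 {} no_coroots \<zeta>2 \<and>
           zhom A1 A2 \<zeta>3 \<and>
           (\<forall>(x, t)\<in>cp_lattice X1 T1 h1 f1. \<zeta> (x, t) = (\<zeta>1 x, \<zeta>2 t)) \<and>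
           (\<forall>x\<in>X1. \<zeta>3 (h1 x) = h2 (\<zeta>1 x)) \<and>
           (\<forall>t\<in>T1. \<zeta>3 (f1 t) = f2 (\<zeta>2 t)) \<and>
           \<zeta>1 ` zker X1 h1 \<subseteq> zker X2 h2"
proof -
  define B1 where "B1 = cp_lattice X1 T1 h1 f1"
  define B2 where "B2 = cp_lattice X2 T2 h2 f2"
  have X1: "zsubgroup X1" using rd1 by (rule root_datum_zsubgroup)
  have T1_sub: "zsubgroup T1" and T2_sub: "zsubgroup T2"
    using T1 T2 by (simp_all add: zlattice_zsubgroup)
  obtain q \<tau> where pm: "p_morphism p B1 (cp_roots \<Phi>1) (cp_coroots cor1) B2 (cp_roots \<Phi>2) (cp_coroots cor2) \<zeta> q \<tau>"
    using \<zeta> unfolding is_p_morphism_def B1_def B2_def by blast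
  obtain \<zeta>1 \<zeta>2 where \<zeta>1: "zhom X1 X2 \<zeta>1" and \<zeta>2: "zhom T1 T2 \<zeta>2"
    and split: "\<forall>(x, t)\<in>B1. \<zeta> (x, t) = (\<zeta>1 x, \<zeta>2 t)"
    using cp_p_morphism_splits[OF rd1 ss1 rd2 ss2 T1_sub T2 h1 f1 pm[unfolded B1_def B2_def]]
    unfolding B1_def by blast
  have \<zeta>_B2: "(\<zeta>1 x, \<zeta>2 t) \<in> B2" if "(x, t) \<in> B1" for x t
  proof -
    have "\<zeta> (x, t) \<in> B2" using p_morphism_zhom[OF pm] that by (auto simp: zhom_def)
    moreover have "\<zeta> (x, t) = (\<zeta>1 x, \<zeta>2 t)" using split that by blast
    ultimately show ?thesis by simp
  qed
  have "p_morphism p X1 \<Phi>1 cor1 X2 \<Phi>2 cor2 \<zeta>1 (\<lambda>\<beta>. q (\<beta>, 0)) (\<lambda>\<beta>. fst (\<tau> (\<beta>, 0)))"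
  proof (rule cp_p_morphism_restricts[OF pm \<zeta>1])
    show "\<forall>w\<in>B1. fst (\<zeta> w) = \<zeta>1 (fst w)" using split by auto
    show "fst ` B1 = X1" unfolding B1_def using h1(2) f1(2) by (simp add: fst_cp_lattice)
    show "cp_roots \<Phi>1 \<subseteq> B1"
      unfolding B1_def using rd1 T1_sub h1(3) zhom_zero[OF T1_sub f1(1)]
      by (intro cp_roots_subset_cp_lattice) (simp_all add: root_datum_def zsubgroup_def)
  qed
  then have pm1: "is_p_morphism p X1 \<Phi>1 cor1 X2 \<Phi>2 cor2 \<zeta>1"
    unfolding is_p_morphism_def by blast
  have ker: "\<zeta>1 x \<in> X2 \<and> h2 (\<zeta>1 x) = 0" if "x \<in> X1" "h1 x = 0" for x
  proof -
    have "(x, 0) \<in> B1"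
      using that T1_sub zhom_zero[OF T1_sub f1(1)] by (simp add: B1_def cp_lattice_def zsubgroup_def)
    then show ?thesis
      using \<zeta>_B2 zhom_zero[OF T1_sub \<zeta>2] zhom_zero[OF T2_sub f2] by (simp add: B2_def cp_lattice_def)
  qed
  from zhom_comp[OF \<zeta>1 h2] obtain \<zeta>3 where \<zeta>3: "zhom A1 A2 \<zeta>3" and hb: "\<forall>x\<in>X1. \<zeta>3 (h1 x) = h2 (\<zeta>1 x)"
    using zhom_factors_through_surjection[OF X1 _ h1(1,2)] ker by fastforce
  have fc: "\<zeta>3 (f1 t) = f2 (\<zeta>2 t)" if t: "t \<in> T1" for t
  proof -
    have "f1 t \<in> h1 ` X1" using t h1(2) f1(2) by blast
    then obtain x where "(x, t) \<in> B1"
      using t by (auto simp: B1_def cp_lattice_def)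
    then show ?thesis
      using hb \<zeta>_B2 by (auto simp: B1_def B2_def cp_lattice_def)
  qed
  have "\<zeta>1 ` zker X1 h1 \<subseteq> zker X2 h2"
    using ker by (auto simp: zker_def)
  with pm1 torus_is_p_morphism[OF \<zeta>2] \<zeta>3 split hb fc show ?thesis
    unfolding B1_def[symmetric] by (intro exI[of _ \<zeta>1] exI[of _ \<zeta>2] exI[of _ \<zeta>3]) blast
qed

lemma cp_split_inverse:
  assumes "\<forall>w\<in>B1. \<zeta> w \<in> B2" "\<forall>w\<in>B1. \<zeta>' (\<zeta> w) = w"
    and "\<forall>(x, t)\<in>B1. \<zeta> (x, t) = (\<zeta>1 x, \<zeta>2 t)" "\<forall>(x, t)\<in>B2. \<zeta>' (x, t) = (\<eta>1 x, \<eta>2 t)"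
  shows "\<forall>x\<in>fst ` B1. \<eta>1 (\<zeta>1 x) = x" "\<forall>t\<in>snd ` B1. \<eta>2 (\<zeta>2 t) = t"
  using assms by force+

lemma bij_betw_induced:
  assumes "h1 ` X1 = A1" "h2 ` X2 = A2" "\<zeta>1 ` X1 \<subseteq> X2" "\<eta>1 ` X2 \<subseteq> X1"
    and "\<forall>x\<in>X1. \<eta>1 (\<zeta>1 x) = x" "\<forall>y\<in>X2. \<zeta>1 (\<eta>1 y) = y"
    and "\<forall>x\<in>X1. \<zeta>3 (h1 x) = h2 (\<zeta>1 x)" "\<forall>y\<in>X2. \<eta>3 (h2 y) = h1 (\<eta>1 y)"
  shows "bij_betw \<zeta>3 A1 A2"
  by (rule bij_betw_byWitness[where f' = \<eta>3]) (use assms in force)+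

lemma cp_p_isomorphism_components:
  fixes \<zeta> :: "'x1::ab_group_add \<times> 't1::ab_group_add \<Rightarrow> 'x2::ab_group_add \<times> 't2::ab_group_add"
  assumes rd1: "root_datum X1 \<Phi>1 cor1" and ss1: "semisimple X1 \<Phi>1"
    and rd2: "root_datum X2 \<Phi>2 cor2" and ss2: "semisimple X2 \<Phi>2"
    and T1: "zlattice T1" and T2: "zlattice T2"
    and h1: "zhom X1 A1 h1" "h1 ` X1 = A1" "\<forall>\<alpha>\<in>\<Phi>1. h1 \<alpha> = 0"
    and f1: "zhom T1 A1 f1" "f1 ` T1 = A1"
    and h2: "zhom X2 A2 h2" "h2 ` X2 = A2" "\<forall>\<alpha>\<in>\<Phi>2. h2 \<alpha> = 0"
    and f2: "zhom T2 A2 f2" "f2 ` T2 = A2"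
    and iso: "p_isomorphism p
                (cp_lattice X1 T1 h1 f1) (cp_roots \<Phi>1) (cp_coroots cor1)
                (cp_lattice X2 T2 h2 f2) (cp_roots \<Phi>2) (cp_coroots cor2) \<zeta>"
    and \<zeta>1: "is_p_morphism p X1 \<Phi>1 cor1 X2 \<Phi>2 cor2 \<zeta>1"
    and \<zeta>2: "is_p_morphism p T1 {} no_coroots T2 {} no_coroots \<zeta>2"
    and split: "\<forall>(x, t)\<in>cp_lattice X1 T1 h1 f1. \<zeta> (x, t) = (\<zeta>1 x, \<zeta>2 t)"
    and hb: "\<forall>x\<in>X1. \<zeta>3 (h1 x) = h2 (\<zeta>1 x)"
    and ker: "\<zeta>1 ` zker X1 h1 \<subseteq> zker X2 h2"
  shows "p_isomorphism p X1 \<Phi>1 cor1 X2 \<Phi>2 cor2 \<zeta>1 \<and>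
         p_isomorphism p T1 {} no_coroots T2 {} no_coroots \<zeta>2 \<and>
         bij_betw \<zeta>3 A1 A2 \<and> \<zeta>1 ` zker X1 h1 = zker X2 h2"
proof -
  define B1 where "B1 = cp_lattice X1 T1 h1 f1"
  define B2 where "B2 = cp_lattice X2 T2 h2 f2"
  obtain \<zeta>' where \<zeta>: "zhom B1 B2 \<zeta>"
    and \<zeta>': "is_p_morphism p B2 (cp_roots \<Phi>2) (cp_coroots cor2) B1 (cp_roots \<Phi>1) (cp_coroots cor1) \<zeta>'"
    and inv: "\<forall>w\<in>B1. \<zeta>' (\<zeta> w) = w" "\<forall>w\<in>B2. \<zeta> (\<zeta>' w) = w"
    using iso unfolding p_isomorphism_def B1_def B2_def by (blast dest: is_p_morphism_zhom)
  obtain \<eta>1 \<eta>2 \<eta>3 where \<eta>1: "is_p_morphism p X2 \<Phi>2 cor2 X1 \<Phi>1 cor1 \<eta>1"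
    and \<eta>2: "is_p_morphism p T2 {} no_coroots T1 {} no_coroots \<eta>2"
    and split': "\<forall>(x, t)\<in>B2. \<zeta>' (x, t) = (\<eta>1 x, \<eta>2 t)"
    and hb': "\<forall>x\<in>X2. \<eta>3 (h2 x) = h1 (\<eta>1 x)"
    and ker': "\<eta>1 ` zker X2 h2 \<subseteq> zker X1 h1"
    using cp_p_morphism_decomposition[OF rd2 ss2 rd1 ss1 T2 T1 h2 f2 h1(1) f1(1) \<zeta>'[unfolded B1_def B2_def]]
    unfolding B2_def by blast
  have images: "fst ` B1 = X1" "snd ` B1 = T1" "fst ` B2 = X2" "snd ` B2 = T2"
    unfolding B1_def B2_def using h1(2) f1(2) h2(2) f2(2)
    by (simp_all add: fst_cp_lattice snd_cp_lattice)
  have "\<forall>w\<in>B1. \<zeta> w \<in> B2" "\<forall>w\<in>B2. \<zeta>' w \<in> B1"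
    using \<zeta> is_p_morphism_zhom[OF \<zeta>'] by (auto simp: zhom_def)
  from cp_split_inverse[OF this(1) inv(1) split[folded B1_def] split']
    cp_split_inverse[OF this(2) inv(2) split' split[folded B1_def]]
  have inverses: "\<forall>x\<in>X1. \<eta>1 (\<zeta>1 x) = x" "\<forall>t\<in>T1. \<eta>2 (\<zeta>2 t) = t"
    "\<forall>y\<in>X2. \<zeta>1 (\<eta>1 y) = y" "\<forall>s\<in>T2. \<zeta>2 (\<eta>2 s) = s"
    unfolding images by blast+
  have maps: "\<zeta>1 ` X1 \<subseteq> X2" "\<eta>1 ` X2 \<subseteq> X1"
    using is_p_morphism_zhom[OF \<zeta>1] is_p_morphism_zhom[OF \<eta>1] by (simp_all add: zhom_def)
  have "zker X2 h2 \<subseteq> \<zeta>1 ` zker X1 h1"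
  proof
    fix y assume "y \<in> zker X2 h2"
    then show "y \<in> \<zeta>1 ` zker X1 h1"
      using ker' inverses(3) by (force simp: zker_def)
  qed
  then show ?thesis
    unfolding p_isomorphism_def
    using \<zeta>1 \<zeta>2 \<eta>1 \<eta>2 inverses ker bij_betw_induced[OF h1(2) h2(2) maps inverses(1,3) hb hb'] by blast
qed

theorem mainTheorem8:
  fixes p :: nat
    and X1 :: "'x1::ab_group_add set" and \<Phi>1 :: "'x1 set" and cor1 :: "'x1 \<Rightarrow> 'x1 \<Rightarrow> int"
    and X2 :: "'x2::ab_group_add set" and \<Phi>2 :: "'x2 set" and cor2 :: "'x2 \<Rightarrow> 'x2 \<Rightarrow> int"
    and T1 :: "'t1::ab_group_add set" and T2 :: "'t2::ab_group_add set"
    and A1 :: "'a1::ab_group_add set" and A2 :: "'a2::ab_group_add set"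
    and h1 :: "'x1 \<Rightarrow> 'a1" and f1 :: "'t1 \<Rightarrow> 'a1"
    and h2 :: "'x2 \<Rightarrow> 'a2" and f2 :: "'t2 \<Rightarrow> 'a2"
    and \<zeta> :: "'x1 \<times> 't1 \<Rightarrow> 'x2 \<times> 't2"
  assumes p: "p = 0 \<or> prime p"
    and R1: "reduced_root_datum X1 \<Phi>1 cor1" and ss1: "semisimple X1 \<Phi>1"
    and R2: "reduced_root_datum X2 \<Phi>2 cor2" and ss2: "semisimple X2 \<Phi>2"
    and T1: "torus T1" and T2: "torus T2"
    and A1: "zsubgroup A1" "finite A1" and A2: "zsubgroup A2" "finite A2"
    and h1: "zhom X1 A1 h1" "h1 ` X1 = A1" "\<forall>\<alpha>\<in>\<Phi>1. h1 \<alpha> = 0"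
    and f1: "zhom T1 A1 f1" "f1 ` T1 = A1"
    and h2: "zhom X2 A2 h2" "h2 ` X2 = A2" "\<forall>\<alpha>\<in>\<Phi>2. h2 \<alpha> = 0"
    and f2: "zhom T2 A2 f2" "f2 ` T2 = A2"
    and zeta: "is_p_morphism p
                 (cp_lattice X1 T1 h1 f1) (cp_roots \<Phi>1) (cp_coroots cor1)
                 (cp_lattice X2 T2 h2 f2) (cp_roots \<Phi>2) (cp_coroots cor2) \<zeta>"
  shows "\<exists>\<zeta>1 \<zeta>2 \<zeta>3.
           is_p_morphism p X1 \<Phi>1 cor1 X2 \<Phi>2 cor2 \<zeta>1 \<and>
           is_p_morphism p T1 {} no_coroots T2 {} no_coroots \<zeta>2 \<and>
           zhom A1 A2 \<zeta>3 \<and>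
           (\<forall>(x, t)\<in>cp_lattice X1 T1 h1 f1. \<zeta> (x, t) = (\<zeta>1 x, \<zeta>2 t)) \<and>
           (\<forall>x\<in>X1. \<zeta>3 (h1 x) = h2 (\<zeta>1 x)) \<and>
           (\<forall>t\<in>T1. \<zeta>3 (f1 t) = f2 (\<zeta>2 t)) \<and>
           \<zeta>1 ` zker X1 h1 \<subseteq> zker X2 h2 \<and>
           (p_isomorphism p
              (cp_lattice X1 T1 h1 f1) (cp_roots \<Phi>1) (cp_coroots cor1)
              (cp_lattice X2 T2 h2 f2) (cp_roots \<Phi>2) (cp_coroots cor2) \<zeta>
            \<longrightarrow> p_isomorphism p X1 \<Phi>1 cor1 X2 \<Phi>2 cor2 \<zeta>1 \<and>
                p_isomorphism p T1 {} no_coroots T2 {} no_coroots \<zeta>2 \<and>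
                bij_betw \<zeta>3 A1 A2 \<and>
                \<zeta>1 ` zker X1 h1 = zker X2 h2)"
proof -
  have rd1: "root_datum X1 \<Phi>1 cor1" and rd2: "root_datum X2 \<Phi>2 cor2"
    using R1 R2 by (simp_all add: reduced_root_datum_def)
  have lT1: "zlattice T1" and lT2: "zlattice T2"
    using T1 T2 by (simp_all add: torus_zlattice)
  obtain \<zeta>1 \<zeta>2 \<zeta>3 where \<zeta>1: "is_p_morphism p X1 \<Phi>1 cor1 X2 \<Phi>2 cor2 \<zeta>1"
    and \<zeta>2: "is_p_morphism p T1 {} no_coroots T2 {} no_coroots \<zeta>2" and \<zeta>3: "zhom A1 A2 \<zeta>3"
    and split: "\<forall>(x, t)\<in>cp_lattice X1 T1 h1 f1. \<zeta> (x, t) = (\<zeta>1 x, \<zeta>2 t)"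
    and hb: "\<forall>x\<in>X1. \<zeta>3 (h1 x) = h2 (\<zeta>1 x)" and fc: "\<forall>t\<in>T1. \<zeta>3 (f1 t) = f2 (\<zeta>2 t)"
    and ker: "\<zeta>1 ` zker X1 h1 \<subseteq> zker X2 h2"
    using cp_p_morphism_decomposition[OF rd1 ss1 rd2 ss2 lT1 lT2 h1 f1 h2(1) f2(1) zeta] by blast
  with cp_p_isomorphism_components[OF rd1 ss1 rd2 ss2 lT1 lT2 h1 f1 h2 f2 _ \<zeta>1 \<zeta>2 split hb ker]
  show ?thesis by blast
qed

end
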